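(* Let $D$ be a digraph rooted at $r$ and let $v \in V(D) \setminus \{r\}$. For every $I \in \mathcal{G}_{D - rv}(v)$ and every $S \in \mathfrak{S}_D(v)$ there is an $\mathcal{R} \in \mathfrak{P}_D(v)$ orthogonal to $S$ with $I \subseteq E^+(\mathcal{R})$.
   Context: Digraphs have no loops or parallel edges; $D - rv$ denotes $D$ with the edge $rv$ deleted if present. For a vertex $v$ of a digraph $H$, $\mathrm{in}_H(v)$ is the set of edges with head $v$. An $(x,y)$-path is a directed path from $x$ to $y$; an $(x,y)$-path-system is a set of pairwise internally disjoint $(x,y)$-paths. $E^+(\mathcal{P})$ is the set of terminal edges of the paths in $\mathcal{P}$. For a rooted digraph $H$ with root $r$, $\mathcal{G}_H(v)$ is the set of all $I \subseteq \mathrm{in}_H(v)$ for which there is an $(r,v)$-path-system $\mathcal{P}$ in $H$ with $E^+(\mathcal{P}) = I$. For distinct $x,y$ with $xy \notin E$, an $(x,y)$-separation is a set $S \subseteq V \setminus\{x,y\}$ meeting every $(x,y)$-path. A set of paths $\mathcal{P}$ and a vertex set $S$ are orthogonal if each path of $\mathcal{P}$ meets $S$ in exactly one vertex and $S \subseteq \bigcup_{P \in \mathcal{P}} V(P)$. An $(x,y)$-path-system (resp. $(x,y)$-separation) is Erdős–Menger if there is an $(x,y)$-separation (resp. $(x,y)$-path-system) orthogonal to it. $\mathfrak{P}_D(v)$ and $\mathfrak{S}_D(v)$ denote the sets of Erdős–Menger $(r,v)$-path-systems and Erdős–Menger $(r,v)$-separations, respectively, in $D - rv$. *)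

theory Defs
  imports Main
begin

text \<open>A digraph is a vertex set V with an edge set E of ordered pairs
  (so no parallel edges), with E \<subseteq> V \<times> V and no loops.
  The vertex set may be infinite.\<close>

definition digraph :: "'a set \<Rightarrow> ('a \<times> 'a) set \<Rightarrow> bool" where
  "digraph V E \<longleftrightarrow> E \<subseteq> V \<times> V \<and> (\<forall>x. (x, x) \<notin> E)"

definition is_path :: "'a set \<Rightarrow> ('a \<times> 'a) set \<Rightarrow> 'a \<Rightarrow> 'a \<Rightarrow> 'a list \<Rightarrow> bool" where
  "is_path V E x y p \<longleftrightarrow> p \<noteq> [] \<and> hd p = x \<and> last p = y \<and> distinct p \<and> set p \<subseteq> V \<and>
     (\<forall>i. Suc i < length p \<longrightarrow> (p ! i, p ! Suc i) \<in> E)"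

definition in_edges :: "('a \<times> 'a) set \<Rightarrow> 'a \<Rightarrow> ('a \<times> 'a) set" where
  "in_edges E v = {e \<in> E. snd e = v}"

definition path_system :: "'a set \<Rightarrow> ('a \<times> 'a) set \<Rightarrow> 'a \<Rightarrow> 'a \<Rightarrow> 'a list set \<Rightarrow> bool" where
  "path_system V E x y P \<longleftrightarrow> (\<forall>p\<in>P. is_path V E x y p) \<and>
     (\<forall>p\<in>P. \<forall>q\<in>P. p \<noteq> q \<longrightarrow> set p \<inter> set q \<subseteq> {x, y})"

definition term_edges :: "'a list set \<Rightarrow> ('a \<times> 'a) set" where
  "term_edges P = (\<lambda>p. (last (butlast p), last p)) ` P"

definition gens :: "'a set \<Rightarrow> ('a \<times> 'a) set \<Rightarrow> 'a \<Rightarrow> 'a \<Rightarrow> ('a \<times> 'a) set set" where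
  "gens V E r v = {I. I \<subseteq> in_edges E v \<and> (\<exists>P. path_system V E r v P \<and> term_edges P = I)}"

definition separation :: "'a set \<Rightarrow> ('a \<times> 'a) set \<Rightarrow> 'a \<Rightarrow> 'a \<Rightarrow> 'a set \<Rightarrow> bool" where
  "separation V E x y S \<longleftrightarrow> x \<noteq> y \<and> (x, y) \<notin> E \<and> S \<subseteq> V - {x, y} \<and>
     (\<forall>p. is_path V E x y p \<longrightarrow> set p \<inter> S \<noteq> {})"

definition orthogonal :: "'a list set \<Rightarrow> 'a set \<Rightarrow> bool" where
  "orthogonal P S \<longleftrightarrow> (\<forall>p\<in>P. card (set p \<inter> S) = 1) \<and> S \<subseteq> (\<Union>p\<in>P. set p)"

definition EM_path_system :: "'a set \<Rightarrow> ('a \<times> 'a) set \<Rightarrow> 'a \<Rightarrow> 'a \<Rightarrow> 'a list set \<Rightarrow> bool" where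
  "EM_path_system V E x y P \<longleftrightarrow> path_system V E x y P \<and>
     (\<exists>S. separation V E x y S \<and> orthogonal P S)"

definition EM_separation :: "'a set \<Rightarrow> ('a \<times> 'a) set \<Rightarrow> 'a \<Rightarrow> 'a \<Rightarrow> 'a set \<Rightarrow> bool" where
  "EM_separation V E x y S \<longleftrightarrow> separation V E x y S \<and>
     (\<exists>P. path_system V E x y P \<and> orthogonal P S)"

text \<open>\<frak>P_D(v) and \<frak>S_D(v): taken in D - rv.\<close>
definition EM_paths :: "'a set \<Rightarrow> ('a \<times> 'a) set \<Rightarrow> 'a \<Rightarrow> 'a \<Rightarrow> 'a list set set" where
  "EM_paths V E r v = {P. EM_path_system V (E - {(r, v)}) r v P}"

definition EM_seps :: "'a set \<Rightarrow> ('a \<times> 'a) set \<Rightarrow> 'a \<Rightarrow> 'a \<Rightarrow> 'a set set" where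
  "EM_seps V E r v = {S. EM_separation V (E - {(r, v)}) r v S}"

end

theory Submission
  imports Defs
begin

(* Let P be an (r,v)-path system in D - rv orthogonal to S, and Q one with terminal edges I.
  Call y \<noteq> v a crossing if it lies on a P-path and on a Q-path q, not before the last
  vertex of S on q. A P-path meets S no later than at any of its crossings: otherwise its
  segment up to the crossing followed by the rest of q would be an (r,v)-walk avoiding S.
  Match P-paths with Q-paths through crossings stably, P-paths preferring earlier and
  Q-paths later crossings; such a matching exists by Fleiner's fixed-point proof of the
  stable marriage theorem, and stability forces every Q-path to be matched. Rerouting each
  matched P-path at its crossing onto its partner keeps the paths internally disjoint (two
  rerouted paths meeting would contradict stability) and their intersections with S, while
  every Q-path now contributes its terminal edge. *)

section \<open>Positions in lists\<close>

definition index :: "'a list \<Rightarrow> 'a \<Rightarrow> nat" where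
  "index xs x = length (takeWhile (\<lambda>y. y \<noteq> x) xs)"

lemma index_Nil [simp]: "index [] x = 0"
  by (simp add: index_def)

lemma index_Cons [simp]: "index (y # xs) x = (if y = x then 0 else Suc (index xs x))"
  by (simp add: index_def)

lemma index_less_length: "x \<in> set xs \<Longrightarrow> index xs x < length xs"
  by (induction xs) auto

lemma nth_index: "x \<in> set xs \<Longrightarrow> xs ! index xs x = x"
  by (induction xs) auto

lemma index_eq_iff: "x \<in> set xs \<Longrightarrow> y \<in> set xs \<Longrightarrow> index xs x = index xs y \<longleftrightarrow> x = y"
  by (metis nth_index)

lemma index_hd: "xs \<noteq> [] \<Longrightarrow> index xs (hd xs) = 0"
  by (cases xs) auto

lemma index_le_index_last: "distinct xs \<Longrightarrow> x \<in> set xs \<Longrightarrow> index xs x \<le> index xs (last xs)"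
  by (induction xs) (auto simp: last_in_set)

lemma diff_index_less_iff:
  "x \<in> set xs \<Longrightarrow> y \<in> set xs \<Longrightarrow>
    length xs - index xs x < length xs - index xs y \<longleftrightarrow> index xs y < index xs x"
  using index_less_length[of x xs] index_less_length[of y xs] by linarith

lemma diff_index_eq_iff:
  "x \<in> set xs \<Longrightarrow> y \<in> set xs \<Longrightarrow>
    length xs - index xs x = length xs - index xs y \<longleftrightarrow> x = y"
  using index_less_length[of x xs] index_less_length[of y xs] index_eq_iff[of x xs y]
  by linarith

lemma set_takeWhile_index:
  "distinct xs \<Longrightarrow> set (takeWhile (\<lambda>u. u \<noteq> z) xs) = {u \<in> set xs. index xs u < index xs z}"
  by (induction xs) auto

lemma set_dropWhile_index:
  "distinct xs \<Longrightarrow> z \<in> set xs \<Longrightarrow>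
    set (dropWhile (\<lambda>u. u \<noteq> z) xs) = {u \<in> set xs. index xs z \<le> index xs u}"
  by (induction xs) auto

lemma dropWhile_neq_eq_Cons: "z \<in> set xs \<Longrightarrow> \<exists>ys. dropWhile (\<lambda>u. u \<noteq> z) xs = z # ys"
  by (induction xs) auto

lemma last_butlast_append: "2 \<le> length ys \<Longrightarrow> last (butlast (xs @ ys)) = last (butlast ys)"
  by (cases ys rule: rev_cases) (auto simp: butlast_append last_append)

section \<open>Walks, paths and splicing\<close>

lemma is_path_iff_successively:
  "is_path V E x y p \<longleftrightarrow> p \<noteq> [] \<and> hd p = x \<and> last p = y \<and> distinct p \<and> set p \<subseteq> V \<and>
     successively (\<lambda>a b. (a, b) \<in> E) p"
  by (auto simp: is_path_def successively_conv_nth)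

lemma walk_contains_path:
  assumes "xs \<noteq> []" "set xs \<subseteq> V" "successively (\<lambda>a b. (a, b) \<in> E) xs"
  shows "\<exists>p. is_path V E (hd xs) (last xs) p \<and> set p \<subseteq> set xs"
  using assms
proof (induction "length xs" arbitrary: xs rule: less_induct)
  case less
  show ?case
  proof (cases "distinct xs")
    case True
    then show ?thesis
      using less.prems by (auto simp: is_path_iff_successively)
  next
    case False
    then obtain as u bs cs where xs: "xs = as @ [u] @ bs @ [u] @ cs"
      using not_distinct_decomp by blast
    let ?ys = "as @ [u] @ cs"
    have "successively (\<lambda>a b. (a, b) \<in> E) (as @ [u])"
      "successively (\<lambda>a b. (a, b) \<in> E) (u # cs)"
      using less.prems(3) successively_append_iff[of _ "as @ [u] @ bs" "u # cs"]
      unfolding xs by (auto simp: successively_append_iff)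
    then have "successively (\<lambda>a b. (a, b) \<in> E) ?ys"
      by (auto simp: successively_append_iff)
    moreover have "length ?ys < length xs" "?ys \<noteq> []" "set ?ys \<subseteq> V"
      using less.prems(2) unfolding xs by auto
    ultimately obtain p where "is_path V E (hd ?ys) (last ?ys) p" "set p \<subseteq> set ?ys"
      using less.hyps by blast
    moreover have "hd ?ys = hd xs" "last ?ys = last xs" "set ?ys \<subseteq> set xs"
      unfolding xs by (auto simp: hd_append)
    ultimately show ?thesis
      by auto
  qed
qed

lemma path_system_unique_path:
  "path_system V E x y P \<Longrightarrow> p \<in> P \<Longrightarrow> p' \<in> P \<Longrightarrow> u \<in> set p \<Longrightarrow> u \<in> set p' \<Longrightarrow>
    u \<noteq> x \<Longrightarrow> u \<noteq> y \<Longrightarrow> p = p'"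
  unfolding path_system_def by blast

definition splice_at :: "'a list \<Rightarrow> 'a \<Rightarrow> 'a list \<Rightarrow> 'a list" where
  "splice_at p z q = takeWhile (\<lambda>u. u \<noteq> z) p @ dropWhile (\<lambda>u. u \<noteq> z) q"

lemma splice_at_not_Nil: "z \<in> set q \<Longrightarrow> splice_at p z q \<noteq> []"
  by (simp add: splice_at_def)

lemma hd_splice_at:
  assumes "z \<in> set p" "z \<in> set q"
  shows "hd (splice_at p z q) = hd p"
proof -
  obtain q' where "dropWhile (\<lambda>u. u \<noteq> z) q = z # q'"
    using dropWhile_neq_eq_Cons[OF assms(2)] by blast
  then show ?thesis
    using assms(1) by (cases p) (auto simp: splice_at_def)
qed

lemma last_splice_at:
  assumes "z \<in> set q"
  shows "last (splice_at p z q) = last q"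
proof -
  have ne: "dropWhile (\<lambda>u. u \<noteq> z) q \<noteq> []"
    using assms by simp
  then have "last q = last (dropWhile (\<lambda>u. u \<noteq> z) q)"
    using last_appendR takeWhile_dropWhile_id by metis
  with ne show ?thesis
    by (simp add: splice_at_def)
qed

lemma set_splice_at: "set (splice_at p z q) \<subseteq> set p \<union> set q"
  unfolding splice_at_def by (auto dest: set_takeWhileD set_dropWhileD)

lemma set_splice_at_eq:
  "distinct p \<Longrightarrow> distinct q \<Longrightarrow> z \<in> set q \<Longrightarrow>
    set (splice_at p z q) = {u \<in> set p. index p u < index p z} \<union> {u \<in> set q. index q z \<le> index q u}"
  by (simp add: splice_at_def set_takeWhile_index set_dropWhile_index)

lemma successively_splice_at:
  assumes "successively R p" "successively R q" "z \<in> set p" "z \<in> set q"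
  shows "successively R (splice_at p z q)"
proof -
  obtain p' where p': "dropWhile (\<lambda>u. u \<noteq> z) p = z # p'"
    using dropWhile_neq_eq_Cons[OF assms(3)] by blast
  obtain q' where q': "dropWhile (\<lambda>u. u \<noteq> z) q = z # q'"
    using dropWhile_neq_eq_Cons[OF assms(4)] by blast
  have "successively R (takeWhile (\<lambda>u. u \<noteq> z) p @ z # p')"
    using assms(1) p' takeWhile_dropWhile_id[of "\<lambda>u. u \<noteq> z" p] by simp
  moreover have "successively R (takeWhile (\<lambda>u. u \<noteq> z) q @ z # q')"
    using assms(2) q' takeWhile_dropWhile_id[of "\<lambda>u. u \<noteq> z" q] by simp
  then have "successively R (z # q')"
    by (simp add: successively_append_iff)
  ultimately show ?thesis
    unfolding splice_at_def q' by (auto simp: successively_append_iff)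
qed

lemma splice_at_contains_path:
  assumes "is_path V E x y p" "is_path V E x' y' q" "z \<in> set p" "z \<in> set q"
  shows "\<exists>p'. is_path V E x y' p' \<and> set p' \<subseteq> set (splice_at p z q)"
proof -
  let ?w = "splice_at p z q"
  have "?w \<noteq> []" "hd ?w = x" "last ?w = y'"
    using assms by (auto simp: splice_at_not_Nil hd_splice_at last_splice_at is_path_def)
  moreover have "set ?w \<subseteq> V"
    using assms(1,2) set_splice_at[of p z q] by (auto simp: is_path_def)
  moreover have "successively (\<lambda>a b. (a, b) \<in> E) ?w"
    using assms by (intro successively_splice_at) (auto simp: is_path_iff_successively)
  ultimately show ?thesis
    using walk_contains_path by metis
qed

lemma is_path_splice_at:
  assumes "is_path V E x y p" "is_path V E x' y' q" "z \<in> set p" "z \<in> set q"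
    and "{u \<in> set p. index p u < index p z} \<inter> {u \<in> set q. index q z \<le> index q u} = {}"
  shows "is_path V E x y' (splice_at p z q)"
proof -
  have "distinct (splice_at p z q)"
    using assms(1,2,4,5) unfolding splice_at_def is_path_def
    by (simp add: set_takeWhile_index set_dropWhile_index)
  moreover have "successively (\<lambda>a b. (a, b) \<in> E) (splice_at p z q)"
    using assms(1-4) successively_splice_at by (auto simp: is_path_iff_successively)
  moreover have "set (splice_at p z q) \<subseteq> V"
    using assms(1,2) set_splice_at[of p z q] by (auto simp: is_path_def)
  ultimately show ?thesis
    using assms(1-4) splice_at_not_Nil[of z q p] hd_splice_at[of z p q] last_splice_at[of z q p]
    by (simp add: is_path_iff_successively)
qed

lemma terminal_edge_splice_at:
  assumes "z \<in> set q" "z \<noteq> last q"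
  shows "last (butlast (splice_at p z q)) = last (butlast q)"
proof -
  let ?ys = "dropWhile (\<lambda>u. u \<noteq> z) q"
  obtain q' where q': "?ys = z # q'"
    using dropWhile_neq_eq_Cons[OF assms(1)] by blast
  have "last ?ys = last q"
    using last_splice_at[OF assms(1), of "[]"] by (simp add: splice_at_def)
  then have len: "2 \<le> length ?ys"
    using assms(2) q' by (cases q') auto
  have "last (butlast q) = last (butlast ?ys)"
    using last_butlast_append[OF len, of "takeWhile (\<lambda>u. u \<noteq> z) q"] by simp
  then show ?thesis
    using last_butlast_append[OF len] by (simp add: splice_at_def)
qed

section \<open>Stable matchings\<close>

definition dominated :: "('x \<Rightarrow> 'l) \<Rightarrow> ('x \<Rightarrow> nat) \<Rightarrow> 'x set \<Rightarrow> 'x set" where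
  "dominated line rank W = {x \<in> W. \<exists>y\<in>W. line y = line x \<and> rank y < rank x}"

lemma dominated_mono: "W \<subseteq> W' \<Longrightarrow> dominated line rank W \<subseteq> dominated line rank W'"
  unfolding dominated_def by blast

lemma dominated_by_undominated:
  assumes "x \<in> dominated line rank W"
  shows "\<exists>m \<in> W - dominated line rank W. line m = line x \<and> rank m < rank x"
proof -
  obtain y where y: "y \<in> W" "line y = line x" "rank y < rank x"
    using assms unfolding dominated_def by blast
  obtain m where m: "m \<in> W" "line m = line x"
    and least: "\<And>m'. m' \<in> W \<Longrightarrow> line m' = line x \<Longrightarrow> rank m \<le> rank m'"
    using ex_has_least_nat[of "\<lambda>m. m \<in> W \<and> line m = line x" y rank] y by blast
  have "m \<notin> dominated line rank W"
    using m least unfolding dominated_def by (auto simp: not_less)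
  then show ?thesis
    using m least[OF y(1,2)] y(3) by auto
qed

lemma inj_on_undominated:
  assumes "inj_on (\<lambda>x. (line x, rank x)) W"
  shows "inj_on line (W - dominated line rank W)"
proof (rule inj_onI, rule ccontr)
  fix x y
  assume x: "x \<in> W - dominated line rank W" and y: "y \<in> W - dominated line rank W"
    and "line x = line y" "x \<noteq> y"
  then have "rank x \<noteq> rank y"
    using assms by (auto dest: inj_onD)
  then show False
    using x y \<open>line x = line y\<close> unfolding dominated_def by (auto simp: neq_iff)
qed

lemma stable_matching_of_fixpoint:
  assumes inj_a: "inj_on (\<lambda>x. (a x, ra x)) X" and inj_b: "inj_on (\<lambda>x. (b x, rb x)) X"
    and Y: "Y = X - dominated a ra Z" and Z: "Z = X - dominated b rb Y"
  shows "inj_on a (Y \<inter> Z)" "inj_on b (Y \<inter> Z)"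
    and "x \<in> X - Y \<inter> Z \<Longrightarrow>
      (\<exists>m \<in> Y \<inter> Z. a m = a x \<and> ra m < ra x) \<or> (\<exists>m \<in> Y \<inter> Z. b m = b x \<and> rb m < rb x)"
proof -
  have "Y \<subseteq> X" "Z \<subseteq> X"
    using Y Z by blast+
  have "inj_on a (Z - dominated a ra Z)"
    using inj_on_subset[OF inj_a \<open>Z \<subseteq> X\<close>] by (rule inj_on_undominated)
  moreover have "Y \<inter> Z \<subseteq> Z - dominated a ra Z"
    using Y by blast
  ultimately show "inj_on a (Y \<inter> Z)"
    by (rule inj_on_subset)
  have "inj_on b (Y - dominated b rb Y)"
    using inj_on_subset[OF inj_b \<open>Y \<subseteq> X\<close>] by (rule inj_on_undominated)
  moreover have "Y \<inter> Z \<subseteq> Y - dominated b rb Y"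
    using Z by blast
  ultimately show "inj_on b (Y \<inter> Z)"
    by (rule inj_on_subset)
  assume x: "x \<in> X - Y \<inter> Z"
  show "(\<exists>m \<in> Y \<inter> Z. a m = a x \<and> ra m < ra x) \<or> (\<exists>m \<in> Y \<inter> Z. b m = b x \<and> rb m < rb x)"
  proof (cases "x \<in> Y")
    case False
    then have "x \<in> dominated a ra Z"
      using x Y by blast
    then obtain m where "m \<in> Z - dominated a ra Z" "a m = a x" "ra m < ra x"
      by (blast dest: dominated_by_undominated)
    then show ?thesis
      using Y \<open>Z \<subseteq> X\<close> by blast
  next
    case True
    then have "x \<in> dominated b rb Y"
      using x Z by blast
    then obtain m where "m \<in> Y - dominated b rb Y" "b m = b x" "rb m < rb x"
      by (blast dest: dominated_by_undominated)
    then show ?thesis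
      using Z \<open>Y \<subseteq> X\<close> by blast
  qed
qed

(* Read x \<in> X as an edge of a bipartite graph joining a x and b x; each vertex ranks its
  edges, lower rank being preferred. *)
theorem stable_matching_exists:
  fixes a :: "'x \<Rightarrow> 'a" and b :: "'x \<Rightarrow> 'b" and ra rb :: "'x \<Rightarrow> nat"
  assumes inj_a: "inj_on (\<lambda>x. (a x, ra x)) X" and inj_b: "inj_on (\<lambda>x. (b x, rb x)) X"
  shows "\<exists>M \<subseteq> X. inj_on a M \<and> inj_on b M \<and>
    (\<forall>x \<in> X - M. (\<exists>m\<in>M. a m = a x \<and> ra m < ra x) \<or> (\<exists>m\<in>M. b m = b x \<and> rb m < rb x))"
proof -
  define f where "f Y = X - dominated a ra (X - dominated b rb Y)" for Y
  have "mono f"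
    unfolding f_def by (intro monoI Diff_mono dominated_mono) auto
  define Y where "Y = lfp f"
  define Z where "Z = X - dominated b rb Y"
  have Y: "Y = X - dominated a ra Z"
    using lfp_unfold[OF \<open>mono f\<close>] unfolding Y_def Z_def f_def by simp
  have "Y \<inter> Z \<subseteq> X"
    unfolding Z_def by blast
  then show ?thesis
    using stable_matching_of_fixpoint[OF inj_a inj_b Y Z_def] by blast
qed

section \<open>Rerouting a path system along a stable matching\<close>

locale linkage =
  fixes V :: "'a set" and F :: "('a \<times> 'a) set" and r v :: 'a
    and P Q :: "'a list set" and S :: "'a set"
  assumes separation: "separation V F r v S"
    and path_system_P: "path_system V F r v P" and orthogonal_P: "orthogonal P S"
    and path_system_Q: "path_system V F r v Q"
begin

lemma r_notin_S: "r \<notin> S" and v_notin_S: "v \<notin> S"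
  using separation unfolding separation_def by blast+

lemma is_path_P: "p \<in> P \<Longrightarrow> is_path V F r v p"
  using path_system_P unfolding path_system_def by blast

lemma is_path_Q: "q \<in> Q \<Longrightarrow> is_path V F r v q"
  using path_system_Q unfolding path_system_def by blast

lemma path_meets_S: "is_path V F r v p \<Longrightarrow> \<exists>s \<in> S. s \<in> set p"
  using separation unfolding separation_def by blast

lemma P_meets_S_once: "p \<in> P \<Longrightarrow> \<exists>s. set p \<inter> S = {s}"
  using orthogonal_P unfolding orthogonal_def by (simp add: card_1_singleton_iff)

lemma S_covered: "s \<in> S \<Longrightarrow> \<exists>p \<in> P. s \<in> set p"
  using orthogonal_P unfolding orthogonal_def by blast

definition crossings :: "'a set" where
  "crossings = {y. y \<noteq> v \<and> (\<exists>p \<in> P. y \<in> set p) \<and>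
     (\<exists>q \<in> Q. y \<in> set q \<and> (\<forall>s \<in> S \<inter> set q. index q s \<le> index q y))}"

lemma crossing_neq_r:
  assumes "y \<in> crossings"
  shows "y \<noteq> r"
proof
  assume "y = r"
  obtain q where q: "q \<in> Q" "y \<in> set q" and late: "\<forall>s \<in> S \<inter> set q. index q s \<le> index q y"
    using assms unfolding crossings_def by blast
  obtain s where s: "s \<in> S" "s \<in> set q"
    using path_meets_S[OF is_path_Q[OF q(1)]] by blast
  have "index q r = 0"
    using is_path_Q[OF q(1)] by (auto simp: is_path_def index_hd)
  moreover have "s \<noteq> r"
    using s r_notin_S by blast
  then have "index q s \<noteq> index q r"
    using s q \<open>y = r\<close> by (simp add: index_eq_iff)
  ultimately show False
    using late s \<open>y = r\<close> by fastforce
qed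

definition P_path :: "'a \<Rightarrow> 'a list" where
  "P_path y = (THE p. p \<in> P \<and> y \<in> set p)"

definition Q_path :: "'a \<Rightarrow> 'a list" where
  "Q_path y = (THE q. q \<in> Q \<and> y \<in> set q)"

lemma P_path_eq: "p \<in> P \<Longrightarrow> y \<in> set p \<Longrightarrow> y \<noteq> r \<Longrightarrow> y \<noteq> v \<Longrightarrow> P_path y = p"
  unfolding P_path_def using path_system_unique_path[OF path_system_P] by blast

lemma Q_path_eq: "q \<in> Q \<Longrightarrow> y \<in> set q \<Longrightarrow> y \<noteq> r \<Longrightarrow> y \<noteq> v \<Longrightarrow> Q_path y = q"
  unfolding Q_path_def using path_system_unique_path[OF path_system_Q] by blast

lemma crossing_P_path:
  assumes "y \<in> crossings"
  shows "P_path y \<in> P" "y \<in> set (P_path y)"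
  using assms P_path_eq crossing_neq_r[OF assms] unfolding crossings_def by auto

lemma crossing_Q_path:
  assumes "y \<in> crossings"
  shows "Q_path y \<in> Q" "y \<in> set (Q_path y)"
    and "s \<in> S \<Longrightarrow> s \<in> set (Q_path y) \<Longrightarrow> index (Q_path y) s \<le> index (Q_path y) y"
  using assms Q_path_eq crossing_neq_r[OF assms] unfolding crossings_def by auto

lemma crossing_later_on_Q_path:
  assumes m: "m \<in> crossings" "y \<in> set (Q_path m)" "index (Q_path m) m \<le> index (Q_path m) y"
    and "y \<noteq> v" "p \<in> P" "y \<in> set p"
  shows "y \<in> crossings"
proof -
  have "index (Q_path m) s \<le> index (Q_path m) y" if "s \<in> S" "s \<in> set (Q_path m)" for s
    using crossing_Q_path(3)[OF m(1) that] m(3) by linarith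
  then show ?thesis
    unfolding crossings_def using assms crossing_Q_path(1)[OF m(1)] by blast
qed

lemma S_before_crossing:
  assumes y: "y \<in> crossings" and p: "p \<in> P" "y \<in> set p" and s: "s \<in> S" "s \<in> set p"
  shows "index p s \<le> index p y"
proof (rule ccontr)
  assume "\<not> index p s \<le> index p y"
  then have y_before_s: "index p y < index p s"
    by simp
  have S_on_p: "z = s" if "z \<in> S" "z \<in> set p" for z
    using P_meets_S_once[OF p(1)] s that by (metis IntI singletonD)
  define q where "q = Q_path y"
  have p_path: "is_path V F r v p" and q_path: "is_path V F r v q" and "y \<in> set q"
    unfolding q_def using is_path_P[OF p(1)] crossing_Q_path[OF y] is_path_Q by auto
  obtain p' where "is_path V F r v p'" "set p' \<subseteq> set (splice_at p y q)"
    using splice_at_contains_path[OF p_path q_path p(2) \<open>y \<in> set q\<close>] by blast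
  then obtain z where z: "z \<in> S" "z \<in> set (splice_at p y q)"
    using path_meets_S by blast
  moreover have "set (splice_at p y q) =
      {u \<in> set p. index p u < index p y} \<union> {u \<in> set q. index q y \<le> index q u}"
    using p_path q_path \<open>y \<in> set q\<close> by (simp add: set_splice_at_eq is_path_def)
  ultimately consider "z \<in> set p" "index p z < index p y" | "z \<in> set q" "index q y \<le> index q z"
    by blast
  then show False
  proof cases
    case 1
    then show False
      using S_on_p[OF z(1)] y_before_s by simp
  next
    case 2
    moreover have "index q z \<le> index q y"
      using crossing_Q_path(3)[OF y z(1)] 2 unfolding q_def by blast
    ultimately have "z = y"
      using \<open>y \<in> set q\<close> index_eq_iff by (metis le_antisym)
    then show False
      using S_on_p[OF z(1)] p(2) y_before_s by simp
  qed
qed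

end

locale stable_linkage = linkage +
  fixes M :: "'a set"
  assumes M_crossings: "M \<subseteq> crossings"
    and inj_P_path: "inj_on P_path M" and inj_Q_path: "inj_on Q_path M"
    and stable: "x \<in> crossings - M \<Longrightarrow>
      (\<exists>m\<in>M. P_path m = P_path x \<and> index (P_path x) m < index (P_path x) x) \<or>
      (\<exists>m\<in>M. Q_path m = Q_path x \<and> index (Q_path x) x < index (Q_path x) m)"

lemma (in linkage) stable_linkage_exists: "\<exists>M. stable_linkage V F r v P Q S M"
proof -
  define rank_P where "rank_P x = index (P_path x) x" for x
  \<comment> \<open>reversed, as Q-paths prefer later crossings\<close>
  define rank_Q where "rank_Q x = length (Q_path x) - index (Q_path x) x" for x
  have "inj_on (\<lambda>x. (P_path x, rank_P x)) crossings"
    unfolding rank_P_def by (rule inj_onI) (metis crossing_P_path(2) index_eq_iff prod.inject)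
  moreover have "inj_on (\<lambda>x. (Q_path x, rank_Q x)) crossings"
    unfolding rank_Q_def by (rule inj_onI) (metis crossing_Q_path(2) diff_index_eq_iff prod.inject)
  ultimately obtain M where M: "M \<subseteq> crossings" "inj_on P_path M" "inj_on Q_path M"
    and stable: "\<And>x. x \<in> crossings - M \<Longrightarrow>
      (\<exists>m\<in>M. P_path m = P_path x \<and> rank_P m < rank_P x) \<or>
      (\<exists>m\<in>M. Q_path m = Q_path x \<and> rank_Q m < rank_Q x)"
    using stable_matching_exists[of P_path rank_P crossings Q_path rank_Q] by auto
  have "(\<exists>m\<in>M. P_path m = P_path x \<and> index (P_path x) m < index (P_path x) x) \<or>
      (\<exists>m\<in>M. Q_path m = Q_path x \<and> index (Q_path x) x < index (Q_path x) m)"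
    if x: "x \<in> crossings - M" for x
    using stable[OF x]
  proof (elim disjE bexE conjE)
    fix m
    assume "m \<in> M" "P_path m = P_path x" "rank_P m < rank_P x"
    then show ?thesis
      unfolding rank_P_def by auto
  next
    fix m
    assume m: "m \<in> M" "Q_path m = Q_path x" "rank_Q m < rank_Q x"
    then have "index (Q_path x) x < index (Q_path x) m"
      using x M(1) crossing_Q_path(2)[of x] crossing_Q_path(2)[of m]
        diff_index_less_iff[of m "Q_path x" x]
      unfolding rank_Q_def by auto
    then show ?thesis
      using m(1,2) by blast
  qed
  then show ?thesis
    using M unfolding stable_linkage_def stable_linkage_axioms_def
    by (intro exI[of _ M] conjI linkage_axioms) auto
qed

context stable_linkage
begin

lemma M_neq_r: "m \<in> M \<Longrightarrow> m \<noteq> r" and M_neq_v: "m \<in> M \<Longrightarrow> m \<noteq> v"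
  using M_crossings crossing_neq_r unfolding crossings_def by blast+

lemma M_on_P_unique:
  assumes "p \<in> P" "m \<in> M" "m' \<in> M" "m \<in> set p" "m' \<in> set p"
  shows "m = m'"
  using assms P_path_eq M_neq_r M_neq_v inj_P_path by (metis inj_onD)

lemma M_on_Q_unique:
  assumes "q \<in> Q" "m \<in> M" "m' \<in> M" "m \<in> set q" "m' \<in> set q"
  shows "m = m'"
  using assms Q_path_eq M_neq_r M_neq_v inj_Q_path by (metis inj_onD)

lemma Q_meets_M:
  assumes q: "q \<in> Q"
  shows "\<exists>m\<in>M. m \<in> set q"
proof (rule ccontr)
  assume no_M: "\<not> (\<exists>m\<in>M. m \<in> set q)"
  obtain s0 where "s0 \<in> S" "s0 \<in> set q"
    using path_meets_S[OF is_path_Q[OF q]] by blast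
  then obtain s where s: "s \<in> S" "s \<in> set q"
    and last_S: "\<forall>s'. s' \<in> S \<and> s' \<in> set q \<longrightarrow> index q s' \<le> index q s"
    using ex_has_greatest_nat[of "\<lambda>s. s \<in> S \<and> s \<in> set q" s0 "index q" "length q"]
    by (auto simp: index_less_length)
  obtain p where p: "p \<in> P" "s \<in> set p"
    using S_covered[OF s(1)] by blast
  have s_crossing: "s \<in> crossings"
    unfolding crossings_def using s last_S p q v_notin_S by blast
  have "Q_path s = q"
    using Q_path_eq q s(2) crossing_neq_r[OF s_crossing] v_notin_S s(1) by blast
  moreover have "P_path s = p"
    using P_path_eq p crossing_neq_r[OF s_crossing] v_notin_S s(1) by blast
  moreover have "s \<notin> M"
    using no_M s(2) by blast
  ultimately consider m where "m \<in> M" "P_path m = p" "index p m < index p s"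
    | m where "m \<in> M" "Q_path m = q"
    using stable[of s] s_crossing by auto
  then show False
  proof cases
    case 1
    then have "m \<in> crossings" "m \<in> set p"
      using M_crossings crossing_P_path(2) by auto
    then show False
      using S_before_crossing[of m p s] 1 p s(1) by simp
  next
    case 2
    then show False
      using no_M crossing_Q_path(2) M_crossings by blast
  qed
qed

(* Otherwise y would be an unmatched crossing blocked neither on p nor on Q_path m. *)
lemma crossing_blocked:
  assumes m: "m \<in> M" "y \<in> set (Q_path m)" "index (Q_path m) m \<le> index (Q_path m) y"
    and "y \<noteq> v" and p: "p \<in> P" "y \<in> set p"
    and before: "\<forall>m' \<in> M. m' \<in> set p \<longrightarrow> index p y < index p m'"
  shows False
proof (cases "y = m")
  case True
  then show False
    using before m(1) p(2) by blast
next
  case False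
  define q where "q = Q_path m"
  have m_crossing: "m \<in> crossings"
    using m(1) M_crossings by blast
  have q: "q \<in> Q" "m \<in> set q"
    unfolding q_def using crossing_Q_path[OF m_crossing] by auto
  have m_before_y: "index q m < index q y"
    using m False q(2) index_eq_iff[of m q y] unfolding q_def by fastforce
  have y_crossing: "y \<in> crossings"
    using crossing_later_on_Q_path[OF m_crossing m(2,3) \<open>y \<noteq> v\<close> p] .
  have "Q_path y = q" "P_path y = p"
    using Q_path_eq[OF q(1) m(2)[folded q_def]] P_path_eq[OF p]
      crossing_neq_r[OF y_crossing] \<open>y \<noteq> v\<close> by auto
  moreover have "y \<notin> M"
    using M_on_Q_unique[OF q(1) _ m(1) m(2)[folded q_def] q(2)] False by blast
  ultimately consider m' where "m' \<in> M" "P_path m' = p" "index p m' < index p y"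
    | m' where "m' \<in> M" "Q_path m' = q" "index q y < index q m'"
    using stable[of y] y_crossing by auto
  then show False
  proof cases
    case 1
    then show False
      using before crossing_P_path(2) M_crossings by fastforce
  next
    case 2
    then have "m' = m"
      using M_on_Q_unique[OF q(1) _ m(1) _ q(2)] crossing_Q_path(2) M_crossings by blast
    then show False
      using 2 m_before_y by simp
  qed
qed

definition reroute :: "'a list \<Rightarrow> 'a list" where
  "reroute p = (if M \<inter> set p = {} then p
     else let m = the_elem (M \<inter> set p) in splice_at p m (Q_path m))"

lemma reroute_unmatched: "M \<inter> set p = {} \<Longrightarrow> reroute p = p"
  by (simp add: reroute_def)

lemma reroute_matched:
  assumes "p \<in> P" "m \<in> M" "m \<in> set p"
  shows "reroute p = splice_at p m (Q_path m)"
proof -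
  have "M \<inter> set p = {m}"
    using assms M_on_P_unique by blast
  then show ?thesis
    by (simp add: reroute_def)
qed

lemma set_reroute_matched:
  assumes "p \<in> P" "m \<in> M" "m \<in> set p"
  shows "set (reroute p) =
    {u \<in> set p. index p u < index p m} \<union> {u \<in> set (Q_path m). index (Q_path m) m \<le> index (Q_path m) u}"
proof -
  have "distinct p" "distinct (Q_path m)" "m \<in> set (Q_path m)"
    using is_path_P[OF assms(1)] is_path_Q crossing_Q_path M_crossings assms(2)
    by (auto simp: is_path_def)
  then show ?thesis
    unfolding reroute_matched[OF assms] by (rule set_splice_at_eq)
qed

lemma set_reroute:
  assumes "p \<in> P" "y \<in> set (reroute p)"
  shows "(y \<in> set p \<and> (\<forall>m \<in> M. m \<in> set p \<longrightarrow> index p y < index p m)) \<or>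
    (\<exists>m \<in> M. m \<in> set p \<and> y \<in> set (Q_path m) \<and> index (Q_path m) m \<le> index (Q_path m) y)"
proof (cases "M \<inter> set p = {}")
  case True
  then show ?thesis
    using assms(2) by (auto simp: reroute_unmatched)
next
  case False
  then obtain m where m: "m \<in> M" "m \<in> set p"
    by blast
  then show ?thesis
    using assms set_reroute_matched[OF assms(1) m] M_on_P_unique[OF assms(1) _ m(1) _ m(2)]
    by blast
qed

lemma is_path_reroute:
  assumes p: "p \<in> P"
  shows "is_path V F r v (reroute p)"
proof (cases "M \<inter> set p = {}")
  case True
  then show ?thesis
    using is_path_P[OF p] by (simp add: reroute_unmatched)
next
  case False
  then obtain m where m: "m \<in> M" "m \<in> set p"
    by blast
  define q where "q = Q_path m"
  have p_path: "is_path V F r v p" and q_path: "is_path V F r v q" and "m \<in> set q"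
    using is_path_P[OF p] is_path_Q crossing_Q_path M_crossings m(1) unfolding q_def by auto
  have "{u \<in> set p. index p u < index p m} \<inter> {u \<in> set q. index q m \<le> index q u} = {}"
  proof (rule ccontr)
    assume "\<not> ?thesis"
    then obtain y where y: "y \<in> set p" "index p y < index p m" "y \<in> set q" "index q m \<le> index q y"
      by blast
    have "y \<noteq> v"
      using y(2) index_le_index_last[of p m] m(2) p_path by (auto simp: is_path_def)
    moreover have "\<forall>m' \<in> M. m' \<in> set p \<longrightarrow> index p y < index p m'"
      using y(2) M_on_P_unique[OF p _ m(1) _ m(2)] by blast
    ultimately show False
      using crossing_blocked[OF m(1) _ _ _ p y(1)] y(3,4) unfolding q_def by blast
  qed
  then show ?thesis
    using is_path_splice_at[OF p_path q_path m(2) \<open>m \<in> set q\<close>] reroute_matched[OF p m]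
    unfolding q_def by simp
qed

lemma reroute_disjoint:
  assumes p: "p1 \<in> P" "p2 \<in> P" "p1 \<noteq> p2"
    and y: "y \<in> set (reroute p1)" "y \<in> set (reroute p2)" "y \<noteq> r" "y \<noteq> v"
  shows False
  using set_reroute[OF p(1) y(1)] set_reroute[OF p(2) y(2)]
proof (elim disjE conjE bexE)
  assume "y \<in> set p1" "y \<in> set p2"
  then show False
    using path_system_unique_path[OF path_system_P p(1,2)] y(3,4) p(3) by blast
next
  fix m2
  assume "y \<in> set p1" "\<forall>m \<in> M. m \<in> set p1 \<longrightarrow> index p1 y < index p1 m"
    "m2 \<in> M" "y \<in> set (Q_path m2)" "index (Q_path m2) m2 \<le> index (Q_path m2) y"
  then show False
    using crossing_blocked[OF _ _ _ y(4) p(1)] by blast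
next
  fix m1
  assume "y \<in> set p2" "\<forall>m \<in> M. m \<in> set p2 \<longrightarrow> index p2 y < index p2 m"
    "m1 \<in> M" "y \<in> set (Q_path m1)" "index (Q_path m1) m1 \<le> index (Q_path m1) y"
  then show False
    using crossing_blocked[OF _ _ _ y(4) p(2)] by blast
next
  fix m1 m2
  assume m: "m1 \<in> M" "m1 \<in> set p1" "y \<in> set (Q_path m1)"
    "m2 \<in> M" "m2 \<in> set p2" "y \<in> set (Q_path m2)"
  have "Q_path m1 = Q_path m2"
    using path_system_unique_path[OF path_system_Q _ _ m(3) m(6) y(3,4)]
      crossing_Q_path(1) M_crossings m(1,4) by blast
  then have "m1 = m2"
    using inj_Q_path m(1,4) by (meson inj_onD)
  then show False
    using path_system_unique_path[OF path_system_P p(1,2) m(2)] m(5) M_neq_r M_neq_v m(1) p(3)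
    by blast
qed

lemma reroute_inter_S:
  assumes p: "p \<in> P"
  shows "set (reroute p) \<inter> S = set p \<inter> S"
proof (cases "M \<inter> set p = {}")
  case True
  then show ?thesis
    by (simp add: reroute_unmatched)
next
  case False
  then obtain m where m: "m \<in> M" "m \<in> set p"
    by blast
  define q where "q = Q_path m"
  have m_crossing: "m \<in> crossings" and "m \<in> set q"
    using m(1) M_crossings crossing_Q_path(2) unfolding q_def by auto
  obtain s where s: "set p \<inter> S = {s}"
    using P_meets_S_once[OF p] by blast
  have s_before_m: "index p s \<le> index p m"
    using S_before_crossing[OF m_crossing p m(2)] s by blast
  have reroute: "set (reroute p) = {u \<in> set p. index p u < index p m} \<union>
      {u \<in> set q. index q m \<le> index q u}"
    using set_reroute_matched[OF p m] unfolding q_def .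
  have "z = m" if "z \<in> S" "z \<in> set q" "index q m \<le> index q z" for z
    using that crossing_Q_path(3)[OF m_crossing] \<open>m \<in> set q\<close> index_eq_iff unfolding q_def
    by (metis le_antisym)
  then have sub: "set (reroute p) \<inter> S \<subseteq> set p \<inter> S"
    using reroute m(2) by blast
  have "s \<in> set (reroute p)"
  proof (cases "index p s < index p m")
    case True
    then show ?thesis
      using s reroute by auto
  next
    case False
    then have "s = m"
      using s_before_m s m(2) index_eq_iff by (metis IntD1 insertI1 le_antisym not_le)
    then show ?thesis
      using reroute \<open>m \<in> set q\<close> by auto
  qed
  moreover have "s \<in> S"
    using s by blast
  ultimately have "set p \<inter> S \<subseteq> set (reroute p) \<inter> S"
    by (simp add: s)
  with sub show ?thesis
    by (rule equalityI)
qed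

lemma terminal_edge_reroute:
  assumes q: "q \<in> Q"
  shows "\<exists>p \<in> P. last (butlast (reroute p)) = last (butlast q) \<and> last (reroute p) = last q"
proof -
  obtain m where m: "m \<in> M" "m \<in> set q"
    using Q_meets_M[OF q] by blast
  define p where "p = P_path m"
  have p: "p \<in> P" "m \<in> set p"
    unfolding p_def using crossing_P_path m(1) M_crossings by auto
  have "Q_path m = q"
    using Q_path_eq[OF q m(2)] M_neq_r M_neq_v m(1) by blast
  then have "reroute p = splice_at p m q"
    using reroute_matched[OF p(1) m(1) p(2)] by simp
  moreover have "m \<noteq> last q"
    using is_path_Q[OF q] M_neq_v[OF m(1)] by (simp add: is_path_def)
  ultimately have "last (butlast (reroute p)) = last (butlast q)" "last (reroute p) = last q"
    using terminal_edge_splice_at[OF m(2)] last_splice_at[OF m(2)] by simp_all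
  then show ?thesis
    using p(1) by blast
qed

lemma rerouting:
  "path_system V F r v (reroute ` P) \<and> orthogonal (reroute ` P) S \<and>
    term_edges Q \<subseteq> term_edges (reroute ` P)"
proof (intro conjI)
  show "path_system V F r v (reroute ` P)"
    unfolding path_system_def using is_path_reroute reroute_disjoint by blast
  have "S \<subseteq> (\<Union>p \<in> P. set (reroute p))"
    using S_covered reroute_inter_S by blast
  then show "orthogonal (reroute ` P) S"
    using orthogonal_P reroute_inter_S unfolding orthogonal_def by auto
  show "term_edges Q \<subseteq> term_edges (reroute ` P)"
  proof
    fix e
    assume "e \<in> term_edges Q"
    then obtain q where "q \<in> Q" "e = (last (butlast q), last q)"
      unfolding term_edges_def by blast
    then obtain p where "p \<in> P" "e = (last (butlast (reroute p)), last (reroute p))"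
      using terminal_edge_reroute by force
    then show "e \<in> term_edges (reroute ` P)"
      unfolding term_edges_def by blast
  qed
qed

end

lemma rerouting_exists:
  assumes "separation V F r v S" "path_system V F r v P" "orthogonal P S" "path_system V F r v Q"
  shows "\<exists>R. path_system V F r v R \<and> orthogonal R S \<and> term_edges Q \<subseteq> term_edges R"
proof -
  interpret linkage V F r v P Q S
    using assms by (rule linkage.intro)
  obtain M where "stable_linkage V F r v P Q S M"
    using stable_linkage_exists by blast
  then interpret stable_linkage V F r v P Q S M .
  show ?thesis
    using rerouting by blast
qed

theorem lemma2p4:
  fixes V :: "'a set" and E :: "('a \<times> 'a) set" and r v :: 'a
  assumes "digraph V E" and "r \<in> V" and "v \<in> V" and "v \<noteq> r"
    and "I \<in> gens V (E - {(r, v)}) r v"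
    and "S \<in> EM_seps V E r v"
  shows "\<exists>R \<in> EM_paths V E r v. orthogonal R S \<and> I \<subseteq> term_edges R"
proof -
  obtain Q where Q: "path_system V (E - {(r, v)}) r v Q" "term_edges Q = I"
    using assms(5) unfolding gens_def by blast
  obtain P where sep: "separation V (E - {(r, v)}) r v S"
    and P: "path_system V (E - {(r, v)}) r v P" "orthogonal P S"
    using assms(6) unfolding EM_seps_def EM_separation_def by blast
  obtain R where R: "path_system V (E - {(r, v)}) r v R" "orthogonal R S" "I \<subseteq> term_edges R"
    using rerouting_exists[OF sep P Q(1)] Q(2) by blast
  then have "R \<in> EM_paths V E r v"
    using sep unfolding EM_paths_def EM_path_system_def by blast
  then show ?thesis
    using R by blast
qed

end
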